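(* Assume $\mathfrak h=\mathfrak s$, and let $X=\prod_{j\in J}X_j$ be a product of topological spaces. Then the following are equivalent: (1) $X$ is sequentially compact; (2) every $X_j$ is sequentially compact, and the set of $j\in J$ such that $X_j$ contains a sequence which does not converge has cardinality $<\mathfrak s$; (3) every $X_j$ is sequentially compact, and the set of $j\in J$ such that $X_j$ is not ultraconnected has cardinality $<\mathfrak s$.
   Context: No separation axioms are assumed; all topological spaces are nonempty. A space is sequentially compact if every sequence $(x_n)_{n\in\omega}$ has a convergent subsequence. A space is ultraconnected if no two nonempty closed subsets of it are disjoint. The splitting number $\mathfrak s$ is the least cardinality of a family $\mathcal S\subseteq[\omega]^\omega$ such that for every $A\in[\omega]^\omega$ there is $S\in\mathcal S$ with both $A\cap S$ and $A\setminus S$ infinite. The cardinal $\mathfrak h$ is the smallest cardinal such that there exist $\mathfrak h$ sequentially compact spaces whose product is not sequentially compact. *)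

theory Defs
  imports "HOL-Analysis.Analysis"
begin

definition seq_compact_space :: "'a topology \<Rightarrow> bool" where
  "seq_compact_space X \<longleftrightarrow>
     (\<forall>\<sigma>::nat \<Rightarrow> 'a. range \<sigma> \<subseteq> topspace X \<longrightarrow>
        (\<exists>r l. strict_mono r \<and> limitin X (\<sigma> \<circ> r) l sequentially))"

definition ultraconnected_space :: "'a topology \<Rightarrow> bool" where
  "ultraconnected_space X \<longleftrightarrow>
     (\<forall>A B. closedin X A \<and> closedin X B \<and> A \<noteq> {} \<and> B \<noteq> {} \<longrightarrow> A \<inter> B \<noteq> {})"

definition has_nonconvergent_seq :: "'a topology \<Rightarrow> bool" where
  "has_nonconvergent_seq X \<longleftrightarrow>
     (\<exists>\<sigma>::nat \<Rightarrow> 'a. range \<sigma> \<subseteq> topspace X \<and> \<not> (\<exists>l. limitin X \<sigma> l sequentially))"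

definition splitting_family :: "nat set set \<Rightarrow> bool" where
  "splitting_family \<S> \<longleftrightarrow>
     \<S> \<subseteq> {S. infinite S} \<and>
     (\<forall>A. infinite A \<longrightarrow> (\<exists>S\<in>\<S>. infinite (A \<inter> S) \<and> infinite (A - S)))"

text \<open>The cardinality of A is strictly less than the splitting number s, i.e. no
  splitting family has cardinality at most that of A.\<close>
definition card_less_s :: "'i set \<Rightarrow> bool" where
  "card_less_s A \<longleftrightarrow> \<not> (\<exists>\<S>. splitting_family \<S> \<and> (card_of \<S>, card_of A) \<in> ordLeq)"

end

theory Submission
  imports Defs
begin

text \<open>In a sequentially compact space, some sequence fails to converge iff the space is not
  ultraconnected: two disjoint nonempty closed sets let a sequence alternate without
  converging, while in an ultraconnected space the closures of the points of a sequence have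
  the finite intersection property, and a subsequential limit of points taken in their finite
  intersections is a limit of the whole sequence.
  If the product is sequentially compact and \<open>N\<close> is its set of non-ultraconnected factors,
  then for every family \<open>(T\<^sub>j)\<^sub>j\<^sub>\<in>\<^sub>N\<close> of subsets of \<open>\<omega>\<close> a sequence alternating in factor
  \<open>j\<close> according to \<open>T\<^sub>j\<close> has a convergent subsequence, whose index set no \<open>T\<^sub>j\<close> splits;
  hence \<open>|N| < \<ss>\<close>. Conversely, \<open>\<hh> = \<ss>\<close> makes the product over \<open>N\<close> sequentially
  compact, and in the remaining factors every sequence converges.\<close>

lemma limitin_closedin_frequently:
  assumes lim: "limitin X f l sequentially" and "closedin X S"
    and freq: "frequently (\<lambda>n. f n \<in> S) sequentially"
  shows "l \<in> S"
proof (rule ccontr)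
  assume "l \<notin> S"
  then have "eventually (\<lambda>n. f n \<in> topspace X - S) sequentially"
    using lim \<open>closedin X S\<close> unfolding limitin_def closedin_def by blast
  then show False
    using freq by (simp add: frequently_def eventually_mono)
qed

lemma not_limitin_alternating:
  assumes "closedin X A" "closedin X B" "A \<inter> B = {}" "a \<in> A" "b \<in> B"
    and "frequently P sequentially" "frequently (\<lambda>n. \<not> P n) sequentially"
  shows "\<not> limitin X (\<lambda>n. if P n then a else b) l sequentially"
proof
  assume lim: "limitin X (\<lambda>n. if P n then a else b) l sequentially"
  have "l \<in> A"
    using limitin_closedin_frequently[OF lim \<open>closedin X A\<close>] assms(4,6)
    by (simp add: frequently_elim1)
  moreover have "l \<in> B"
    using limitin_closedin_frequently[OF lim \<open>closedin X B\<close>] assms(5,7)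
    by (simp add: frequently_elim1)
  ultimately show False
    using \<open>A \<inter> B = {}\<close> by blast
qed

lemma frequently_strict_mono_in:
  assumes "strict_mono r" "infinite (range r \<inter> S)"
  shows "frequently (\<lambda>n. r n \<in> S) sequentially"
proof -
  have "range r \<inter> S = r ` {n. r n \<in> S}"
    by auto
  then have "infinite {n. r n \<in> S}"
    using assms(2) by (metis finite_imageI)
  then show ?thesis
    by (simp add: frequently_cofinite flip: cofinite_eq_sequentially)
qed

lemma not_ultraconnected_space_iff:
  "\<not> ultraconnected_space X \<longleftrightarrow>
     (\<exists>A B a b. closedin X A \<and> closedin X B \<and> A \<inter> B = {} \<and> a \<in> A \<and> b \<in> B)"
  unfolding ultraconnected_space_def by blast

lemma not_ultraconnected_imp_has_nonconvergent_seq: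
  assumes "\<not> ultraconnected_space X"
  shows "has_nonconvergent_seq X"
proof -
  obtain A B a b where AB: "closedin X A" "closedin X B" "A \<inter> B = {}" "a \<in> A" "b \<in> B"
    using assms unfolding not_ultraconnected_space_iff by blast
  have "frequently (\<lambda>n::nat. even n) sequentially" "frequently (\<lambda>n::nat. \<not> even n) sequentially"
    unfolding frequently_sequentially by (metis dvd_triv_left le_add2 mult_2 even_Suc le_SucI)+
  then have "\<not> limitin X (\<lambda>n. if even n then a else b) l sequentially" for l
    using not_limitin_alternating[OF AB] by blast
  moreover have "range (\<lambda>n::nat. if even n then a else b) \<subseteq> topspace X"
    using AB closedin_subset by auto
  ultimately show ?thesis
    unfolding has_nonconvergent_seq_def by blast
qed

lemma ultraconnected_Inter_closure_of_singletons_nonempty: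
  fixes n :: nat
  assumes "ultraconnected_space X" "range \<sigma> \<subseteq> topspace X"
  shows "closedin X (\<Inter>k\<le>n. X closure_of {\<sigma> k}) \<and> (\<Inter>k\<le>n. X closure_of {\<sigma> k}) \<noteq> {}"
proof (induction n)
  case 0
  then show ?case
    using assms(2) closure_of_subset[of "{\<sigma> 0}" X] by auto
next
  case (Suc n)
  have "\<sigma> (Suc n) \<in> X closure_of {\<sigma> (Suc n)}"
    using assms(2) closure_of_subset[of "{\<sigma> (Suc n)}" X] by auto
  then have "X closure_of {\<sigma> (Suc n)} \<inter> (\<Inter>k\<le>n. X closure_of {\<sigma> k}) \<noteq> {}"
    using Suc by (intro assms(1)[unfolded ultraconnected_space_def, rule_format]) auto
  then show ?case
    using Suc by (simp add: atMost_Suc closedin_Int)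
qed

text \<open>Pick a point \<open>p n\<close> in every closure of \<open>{\<sigma> k}\<close>, \<open>k \<le> n\<close>, and a limit \<open>l\<close> of a
  subsequence of \<open>p\<close>: every neighbourhood of \<open>l\<close> meets all these closures, hence contains
  every \<open>\<sigma> k\<close>.\<close>
lemma ultraconnected_seq_compact_imp_convergent:
  assumes sc: "seq_compact_space X" and uc: "ultraconnected_space X"
    and \<sigma>: "range \<sigma> \<subseteq> topspace X"
  shows "\<exists>l. limitin X \<sigma> l sequentially"
proof -
  define C where "C n = (\<Inter>k\<le>n. X closure_of {\<sigma> k})" for n
  have C: "closedin X (C n)" "C n \<noteq> {}" for n
    unfolding C_def using ultraconnected_Inter_closure_of_singletons_nonempty[OF uc \<sigma>] by auto
  define p where "p n = (SOME x. x \<in> C n)" for n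
  have p: "p n \<in> C n" for n
    using C(2)[of n] unfolding p_def by (simp add: some_in_eq)
  have "range p \<subseteq> topspace X"
    using p C(1) closedin_subset by blast
  then obtain r l where r: "strict_mono r" and lim: "limitin X (p \<circ> r) l sequentially"
    using sc unfolding seq_compact_space_def by blast
  have "\<sigma> k \<in> U" if U: "openin X U" "l \<in> U" for U k
  proof -
    obtain M where M: "\<And>m. m \<ge> M \<Longrightarrow> p (r m) \<in> U"
      using lim U by (auto simp: limitin_def eventually_sequentially)
    have "k \<le> r (max k M)"
      using seq_suble[OF r, of "max k M"] by simp
    then have "p (r (max k M)) \<in> X closure_of {\<sigma> k}"
      using p[of "r (max k M)"] by (auto simp: C_def)
    then show ?thesis
      using M[of "max k M"] U by (auto simp: in_closure_of)
  qed
  then have "limitin X \<sigma> l sequentially"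
    using lim by (simp add: limitin_def)
  then show ?thesis ..
qed

corollary seq_compact_has_nonconvergent_seq_iff:
  assumes "seq_compact_space X"
  shows "has_nonconvergent_seq X \<longleftrightarrow> \<not> ultraconnected_space X"
proof
  assume "has_nonconvergent_seq X"
  then show "\<not> ultraconnected_space X"
    using assms ultraconnected_seq_compact_imp_convergent unfolding has_nonconvergent_seq_def by blast
qed (rule not_ultraconnected_imp_has_nonconvergent_seq)

lemma seq_compact_space_product_factor:
  fixes X :: "'i \<Rightarrow> 'a topology"
  assumes sc: "seq_compact_space (product_topology X J)"
    and z: "z \<in> topspace (product_topology X J)" and "k \<in> J"
  shows "seq_compact_space (X k)"
  unfolding seq_compact_space_def
proof (intro allI impI)
  fix \<sigma> :: "nat \<Rightarrow> 'a"
  assume "range \<sigma> \<subseteq> topspace (X k)"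
  then have "range (\<lambda>n. z(k := \<sigma> n)) \<subseteq> topspace (product_topology X J)"
    using z \<open>k \<in> J\<close> by (auto simp: PiE_iff extensional_def)
  then obtain r l where r: "strict_mono r"
    and lim: "limitin (product_topology X J) ((\<lambda>n. z(k := \<sigma> n)) \<circ> r) l sequentially"
    using sc unfolding seq_compact_space_def by blast
  have "limitin (X k) (\<sigma> \<circ> r) (l k) sequentially"
    using lim \<open>k \<in> J\<close> unfolding limitin_componentwise by (force simp: o_def)
  then show "\<exists>r l. strict_mono r \<and> limitin (X k) (\<sigma> \<circ> r) l sequentially"
    using r by blast
qed

lemma seq_compact_product_unsplit:
  fixes X :: "'i \<Rightarrow> 'a topology" and T :: "'i \<Rightarrow> nat set"
  assumes sc: "seq_compact_space (product_topology X J)"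
    and z: "z \<in> topspace (product_topology X J)"
    and "I \<subseteq> J" and nu: "\<forall>j\<in>I. \<not> ultraconnected_space (X j)"
  shows "\<exists>R. infinite R \<and> (\<forall>j\<in>I. finite (R \<inter> T j) \<or> finite (R - T j))"
proof -
  have "\<forall>j\<in>I. \<exists>A B a b. closedin (X j) A \<and> closedin (X j) B \<and> A \<inter> B = {} \<and> a \<in> A \<and> b \<in> B"
    using nu not_ultraconnected_space_iff by blast
  then obtain A B a b where AB: "\<And>j. j \<in> I \<Longrightarrow>
      closedin (X j) (A j) \<and> closedin (X j) (B j) \<and> A j \<inter> B j = {} \<and> a j \<in> A j \<and> b j \<in> B j"
    by metis
  define \<sigma> where "\<sigma> n = restrict (\<lambda>j. if j \<in> I then if n \<in> T j then a j else b j else z j) J"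
    for n
  have "a j \<in> topspace (X j)" "b j \<in> topspace (X j)" if "j \<in> I" for j
    using AB[OF that] closedin_subset by blast+
  then have "range \<sigma> \<subseteq> topspace (product_topology X J)"
    using z by (auto simp: \<sigma>_def PiE_iff)
  then obtain r l where r: "strict_mono r"
    and lim: "limitin (product_topology X J) (\<sigma> \<circ> r) l sequentially"
    using sc unfolding seq_compact_space_def by blast
  have "finite (range r \<inter> T j) \<or> finite (range r - T j)" if "j \<in> I" for j
  proof (rule ccontr)
    assume "\<not> ?thesis"
    then have "frequently (\<lambda>n. r n \<in> T j) sequentially"
      "frequently (\<lambda>n. \<not> r n \<in> T j) sequentially"
      using frequently_strict_mono_in[OF r, of "T j"] frequently_strict_mono_in[OF r, of "- T j"]
      by (auto simp: Diff_eq)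
    then have "\<not> limitin (X j) (\<lambda>n. if r n \<in> T j then a j else b j) (l j) sequentially"
      using AB[OF \<open>j \<in> I\<close>] not_limitin_alternating by metis
    moreover have "limitin (X j) (\<lambda>n. \<sigma> (r n) j) (l j) sequentially"
      using lim \<open>j \<in> I\<close> \<open>I \<subseteq> J\<close> by (auto simp: limitin_componentwise)
    ultimately show False
      using \<open>j \<in> I\<close> \<open>I \<subseteq> J\<close> by (simp add: \<sigma>_def subsetD)
  qed
  moreover have "infinite (range r)"
    using r strict_mono_imp_inj_on range_inj_infinite by blast
  ultimately show ?thesis
    by blast
qed


lemma card_less_s_if_unsplit:
  assumes "\<And>T :: 'i \<Rightarrow> nat set. \<exists>R. infinite R \<and> (\<forall>j\<in>I. finite (R \<inter> T j) \<or> finite (R - T j))"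
  shows "card_less_s I"
  unfolding card_less_s_def
proof
  assume "\<exists>\<S>. splitting_family \<S> \<and> (card_of \<S>, card_of I) \<in> ordLeq"
  then obtain \<S> f where \<S>: "splitting_family \<S>" and f: "inj_on f \<S>" "f ` \<S> \<subseteq> I"
    by (metis card_of_ordLeq)
  obtain R where R: "infinite R" "\<forall>j\<in>I. finite (R \<inter> inv_into \<S> f j) \<or> finite (R - inv_into \<S> f j)"
    using assms by blast
  obtain S where S: "S \<in> \<S>" "infinite (R \<inter> S)" "infinite (R - S)"
    using \<S> R(1) unfolding splitting_family_def by blast
  have "inv_into \<S> f (f S) = S" "f S \<in> I"
    using f S(1) by auto
  then show False
    using R(2) S(2,3) by metis
qed

lemma seq_compact_product_extend_convergent:
  fixes X :: "'i \<Rightarrow> 'a topology"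
  assumes sc: "seq_compact_space (product_topology X I)" and "I \<subseteq> J"
    and conv: "\<forall>j\<in>J - I. \<not> has_nonconvergent_seq (X j)"
  shows "seq_compact_space (product_topology X J)"
  unfolding seq_compact_space_def
proof (intro allI impI)
  fix \<sigma> :: "nat \<Rightarrow> 'i \<Rightarrow> 'a"
  assume \<sigma>: "range \<sigma> \<subseteq> topspace (product_topology X J)"
  then have "range (\<lambda>n. restrict (\<sigma> n) I) \<subseteq> topspace (product_topology X I)"
    using \<open>I \<subseteq> J\<close> by (force simp: PiE_iff)
  then obtain r l where r: "strict_mono r"
    and lim: "limitin (product_topology X I) ((\<lambda>n. restrict (\<sigma> n) I) \<circ> r) l sequentially"
    using sc unfolding seq_compact_space_def by blast
  have "\<exists>x. limitin (X j) (\<lambda>n. \<sigma> (r n) j) x sequentially" if "j \<in> J - I" for j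
  proof -
    have "range (\<lambda>n. \<sigma> (r n) j) \<subseteq> topspace (X j)"
      using \<sigma> that by (force simp: PiE_iff)
    then show ?thesis
      using conv that unfolding has_nonconvergent_seq_def by blast
  qed
  then obtain m where m: "\<And>j. j \<in> J - I \<Longrightarrow> limitin (X j) (\<lambda>n. \<sigma> (r n) j) (m j) sequentially"
    by metis
  have "limitin (product_topology X J) (\<sigma> \<circ> r) (restrict (\<lambda>j. if j \<in> I then l j else m j) J)
      sequentially"
    unfolding limitin_componentwise
  proof (intro conjI ballI)
    show "\<forall>\<^sub>F n in sequentially. (\<sigma> \<circ> r) n \<in> topspace (product_topology X J)"
      using \<sigma> by (intro always_eventually) auto
    fix j
    assume "j \<in> J"
    show "limitin (X j) (\<lambda>n. (\<sigma> \<circ> r) n j) (restrict (\<lambda>j. if j \<in> I then l j else m j) J j)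
        sequentially"
    proof (cases "j \<in> I")
      case True
      then show ?thesis
        using lim \<open>j \<in> J\<close> by (simp add: limitin_componentwise o_def)
    next
      case False
      then show ?thesis
        using m \<open>j \<in> J\<close> by (simp add: o_def)
    qed
  qed simp
  then show "\<exists>r l. strict_mono r \<and> limitin (product_topology X J) (\<sigma> \<circ> r) l sequentially"
    using r by blast
qed

theorem corollary4p3:
  fixes X :: "'i \<Rightarrow> 'a topology" and J :: "'i set"
  assumes h_ge_s: "\<And>(I :: 'i set) (Y :: 'i \<Rightarrow> 'a topology).
              card_less_s I \<Longrightarrow>
              (\<forall>i\<in>I. topspace (Y i) \<noteq> {} \<and> seq_compact_space (Y i)) \<Longrightarrow>
              seq_compact_space (product_topology Y I)"
    and nonempty: "\<forall>j\<in>J. topspace (X j) \<noteq> {}"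
  shows "(seq_compact_space (product_topology X J)
           \<longleftrightarrow> (\<forall>j\<in>J. seq_compact_space (X j)) \<and>
               card_less_s {j\<in>J. has_nonconvergent_seq (X j)})
       \<and> ((\<forall>j\<in>J. seq_compact_space (X j)) \<and>
               card_less_s {j\<in>J. has_nonconvergent_seq (X j)}
           \<longleftrightarrow> (\<forall>j\<in>J. seq_compact_space (X j)) \<and>
               card_less_s {j\<in>J. \<not> ultraconnected_space (X j)})"
proof -
  let ?N = "{j\<in>J. has_nonconvergent_seq (X j)}"
  have "topspace (product_topology X J) \<noteq> {}"
    using nonempty by (simp add: PiE_eq_empty_iff)
  then obtain z where z: "z \<in> topspace (product_topology X J)"
    by blast
  have N_eq: "?N = {j\<in>J. \<not> ultraconnected_space (X j)}" if "\<forall>j\<in>J. seq_compact_space (X j)"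
    using that by (auto simp: seq_compact_has_nonconvergent_seq_iff)
  have "seq_compact_space (product_topology X J) \<longleftrightarrow>
      (\<forall>j\<in>J. seq_compact_space (X j)) \<and> card_less_s ?N"
  proof
    assume sc: "seq_compact_space (product_topology X J)"
    then have factors: "\<forall>j\<in>J. seq_compact_space (X j)"
      using seq_compact_space_product_factor[OF sc z] by blast
    have "card_less_s ?N"
      by (intro card_less_s_if_unsplit seq_compact_product_unsplit[OF sc z])
        (use factors N_eq in auto)
    with factors show "(\<forall>j\<in>J. seq_compact_space (X j)) \<and> card_less_s ?N" ..
  next
    assume "(\<forall>j\<in>J. seq_compact_space (X j)) \<and> card_less_s ?N"
    then have "seq_compact_space (product_topology X ?N)"
      using h_ge_s nonempty by auto
    then show "seq_compact_space (product_topology X J)"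
      by (rule seq_compact_product_extend_convergent) auto
  qed
  moreover have "(\<forall>j\<in>J. seq_compact_space (X j)) \<and> card_less_s ?N \<longleftrightarrow>
      (\<forall>j\<in>J. seq_compact_space (X j)) \<and> card_less_s {j\<in>J. \<not> ultraconnected_space (X j)}"
    using N_eq by (intro conj_cong) simp_all
  ultimately show ?thesis ..
qed

end
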